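(* Let $G=(N,A)$ be an $s$-$t$ directed graph, let $u,v\in N$ and let $k$ be a positive integer. If $u$ is the $k$-th ancestor of $v$ in the $s$-dominator tree of $G$, then $\mathrm{dom}_t(u,k)$ $t$-dominates $v$, and $v$ does not $t$-dominate $u$ unless $v=\mathrm{dom}_t(u,k)$.
   Context: An $s$-$t$ directed graph is a directed graph (not necessarily acyclic) with a unique source $s$ and unique sink $t$ such that every node is reachable from $s$ and every node reaches $t$. A node $u$ $s$-dominates $v$ if every $s$-$v$ path contains $u$ (every node $s$-dominates itself; strictly if $u\neq v$); a node $w$ $t$-dominates $v$ if every $v$-$t$ path contains $w$. For $v\ne s$ the immediate $s$-dominator of $v$ is the strict $s$-dominator of $v$ that is $s$-dominated by all strict $s$-dominators of $v$; the $s$-dominator tree is rooted at $s$ with the parent of each node being its immediate $s$-dominator. Immediate $t$-dominators and the $t$-dominator tree (rooted at $t$) are defined symmetrically. $\mathrm{dom}_t(u,k)$ denotes the $k$-th ancestor of $u$ in the $t$-dominator tree if $u$ has at least $k$ strict ancestors there, and $t$ otherwise (formally $\mathrm{dom}_t(u,1)$ is the immediate $t$-dominator of $u$ and $\mathrm{dom}_t(u,k)=\mathrm{dom}_t(\mathrm{dom}_t(u,1),k-1)$, defaulting to $t$). *)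

theory Defs
  imports Main
begin

definition is_path :: "('a \<times> 'a) set \<Rightarrow> 'a \<Rightarrow> 'a \<Rightarrow> 'a list \<Rightarrow> bool" where
  "is_path A x y p \<longleftrightarrow> p \<noteq> [] \<and> hd p = x \<and> last p = y \<and>
     (\<forall>i. Suc i < length p \<longrightarrow> (p ! i, p ! Suc i) \<in> A)"

definition reaches :: "('a \<times> 'a) set \<Rightarrow> 'a \<Rightarrow> 'a \<Rightarrow> bool" where
  "reaches A x y \<longleftrightarrow> (\<exists>p. is_path A x y p)"

definition st_graph :: "'a set \<Rightarrow> ('a \<times> 'a) set \<Rightarrow> 'a \<Rightarrow> 'a \<Rightarrow> bool" where
  "st_graph N A s t \<longleftrightarrow> finite N \<and> A \<subseteq> N \<times> N \<and> s \<in> N \<and> t \<in> N \<and>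
     {x \<in> N. \<forall>y. (y, x) \<notin> A} = {s} \<and>
     {x \<in> N. \<forall>y. (x, y) \<notin> A} = {t} \<and>
     (\<forall>v\<in>N. reaches A s v \<and> reaches A v t)"

definition sdom :: "('a \<times> 'a) set \<Rightarrow> 'a \<Rightarrow> 'a \<Rightarrow> 'a \<Rightarrow> bool" where
  "sdom A s u v \<longleftrightarrow> (\<forall>p. is_path A s v p \<longrightarrow> u \<in> set p)"

definition tdom :: "('a \<times> 'a) set \<Rightarrow> 'a \<Rightarrow> 'a \<Rightarrow> 'a \<Rightarrow> bool" where
  "tdom A t w v \<longleftrightarrow> (\<forall>p. is_path A v t p \<longrightarrow> w \<in> set p)"

definition idom_s :: "'a set \<Rightarrow> ('a \<times> 'a) set \<Rightarrow> 'a \<Rightarrow> 'a \<Rightarrow> 'a" where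
  "idom_s N A s v = (THE u. u \<in> N \<and> u \<noteq> v \<and> sdom A s u v \<and>
      (\<forall>w\<in>N. w \<noteq> v \<and> sdom A s w v \<longrightarrow> sdom A s w u))"

definition idom_t :: "'a set \<Rightarrow> ('a \<times> 'a) set \<Rightarrow> 'a \<Rightarrow> 'a \<Rightarrow> 'a" where
  "idom_t N A t v = (THE w. w \<in> N \<and> w \<noteq> v \<and> tdom A t w v \<and>
      (\<forall>x\<in>N. x \<noteq> v \<and> tdom A t x v \<longrightarrow> tdom A t x w))"

text \<open>s_anc N A s k v u: u is the k-th ancestor of v in the s-dominator tree
  (rooted at s, parent = immediate s-dominator).\<close>
fun s_anc :: "'a set \<Rightarrow> ('a \<times> 'a) set \<Rightarrow> 'a \<Rightarrow> nat \<Rightarrow> 'a \<Rightarrow> 'a \<Rightarrow> bool" where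
  "s_anc N A s 0 v u \<longleftrightarrow> u = v"
| "s_anc N A s (Suc k) v u \<longleftrightarrow> v \<noteq> s \<and> s_anc N A s k (idom_s N A s v) u"

text \<open>dom_t(u,k): k-th ancestor of u in the t-dominator tree, defaulting to t.\<close>
fun dom_t :: "'a set \<Rightarrow> ('a \<times> 'a) set \<Rightarrow> 'a \<Rightarrow> 'a \<Rightarrow> nat \<Rightarrow> 'a" where
  "dom_t N A t u 0 = u"
| "dom_t N A t u (Suc k) = (if u = t then t else dom_t N A t (idom_t N A t u) k)"

end

theory Submission
  imports Defs
begin

(* Let a_i be the i-th ancestor of v in the s-dominator tree, so u = a_k, and b_j the j-th
   ancestor of u in the t-dominator tree. Two path-surgery facts link the trees: a strict
   t-dominator of u that does not t-dominate v strictly s-dominates v but not u; and if v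
   t-dominates u, then every strict s-dominator of v not s-dominating u t-dominates u and is
   t-dominated by v. If dom_t(u,k) did not t-dominate v, then b_1, ..., b_k would be k distinct
   nodes among a_1, ..., a_(k-1). If v t-dominates u, say v = b_j, then a_1, ..., a_(k-1) are
   distinct nodes among b_1, ..., b_(j-1), so k <= j, and j > k would contradict the first
   part since b_k t-dominates v = b_j. *)

lemma is_path_Nil [simp]: "\<not> is_path A x y []"
  by (simp add: is_path_def)

lemma is_path_singleton [simp]: "is_path A x y [z] \<longleftrightarrow> z = x \<and> z = y"
  by (auto simp: is_path_def)

lemma is_path_Cons_Cons [simp]:
  "is_path A x z (w # y # p) \<longleftrightarrow> w = x \<and> (x, y) \<in> A \<and> is_path A y z (y # p)"
  by (auto simp: is_path_def nth_Cons split: nat.splits)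

lemma is_path_hd: "is_path A x y p \<Longrightarrow> hd p = x"
  and is_path_last: "is_path A x y p \<Longrightarrow> last p = y"
  by (simp_all add: is_path_def)

lemma is_path_hd_in_set: "is_path A x y p \<Longrightarrow> x \<in> set p"
  and is_path_last_in_set: "is_path A x y p \<Longrightarrow> y \<in> set p"
  by (auto simp: is_path_def)

lemma is_path_append:
  "is_path A x z (p @ y # q) \<longleftrightarrow> is_path A x y (p @ [y]) \<and> is_path A y z (y # q)"
proof (induction p arbitrary: x)
  case Nil
  then show ?case using is_path_hd[of A x z "y # q"] by auto
next
  case (Cons a p)
  show ?case
  proof (cases p)
    case Nil
    then show ?thesis by simp
  next
    case (Cons b p')
    then show ?thesis using Cons.IH[of b] by simp
  qed
qed

lemma is_path_join:
  assumes "is_path A x y p" "is_path A y z q"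
  obtains r where "is_path A x z r" "set r = set p \<union> set q"
proof -
  obtain p' where p: "p = p' @ [y]"
    using assms(1) by (metis append_butlast_last_id is_path_Nil is_path_last)
  obtain q' where q: "q = y # q'"
    using assms(2) by (metis is_path_hd is_path_Nil list.collapse)
  have "is_path A x z (p' @ y # q')" using assms p q is_path_append by metis
  moreover have "set (p' @ y # q') = set p \<union> set q" using p q by auto
  ultimately show thesis using that by blast
qed

lemma is_path_distinct:
  "is_path A x y p \<Longrightarrow> \<exists>q. is_path A x y q \<and> distinct q"
proof (induction "length p" arbitrary: p rule: less_induct)
  case less
  show ?case
  proof (cases "distinct p")
    case False
    then obtain p1 p2 p3 z where p: "p = p1 @ z # p2 @ z # p3"
      using not_distinct_decomp by fastforce
    then have "is_path A x y (p1 @ z # p3)"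
      using less.prems is_path_append[of A x y p1 z] is_path_append[of A z y "z # p2" z] by simp
    moreover have "length (p1 @ z # p3) < length p"
      using p by auto
    ultimately show ?thesis using less.hyps by blast
  qed (use less.prems in blast)
qed

lemma is_path_converse_rev: "is_path A x y p \<Longrightarrow> is_path (A\<inverse>) y x (rev p)"
proof (induction p arbitrary: x)
  case (Cons a p)
  show ?case
  proof (cases p)
    case (Cons b p')
    then have "is_path (A\<inverse>) y b (rev p' @ [b])" "(b, a) \<in> A\<inverse>"
      using Cons.prems Cons.IH by auto
    then show ?thesis using Cons.prems Cons is_path_append[of "A\<inverse>" y a "rev p'" b "[a]"] by auto
  qed (use Cons.prems in auto)
qed simp

lemma is_path_converse_iff: "is_path (A\<inverse>) y x (rev p) \<longleftrightarrow> is_path A x y p"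
  using is_path_converse_rev[of A x y p] is_path_converse_rev[of "A\<inverse>" y x "rev p"] by auto

lemma reaches_converse: "reaches (A\<inverse>) y x \<longleftrightarrow> reaches A x y"
  unfolding reaches_def by (metis is_path_converse_iff rev_rev_ident)

lemma reaches_distinct_path:
  assumes "reaches A x y"
  obtains p where "is_path A x y p" "distinct p"
  using assms is_path_distinct unfolding reaches_def by metis

lemma tdom_eq_sdom_converse: "tdom A t = sdom (A\<inverse>) t"
proof (intro ext)
  fix w v
  show "tdom A t w v = sdom (A\<inverse>) t w v"
    unfolding tdom_def sdom_def
    by (metis is_path_converse_iff rev_rev_ident set_rev)
qed

lemma sdom_refl: "sdom A r y y"
  unfolding sdom_def using is_path_last_in_set by fast

lemma sdom_root: "sdom A r r y"
  unfolding sdom_def using is_path_hd_in_set by fast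

lemma sdom_root_imp_eq: "sdom A r x r \<Longrightarrow> x = r"
  unfolding sdom_def by (metis empty_iff empty_set is_path_singleton set_ConsD)

lemma sdom_trans:
  assumes "sdom A r x y" "sdom A r y z"
  shows "sdom A r x z"
  unfolding sdom_def
proof (intro allI impI)
  fix p assume p: "is_path A r z p"
  then obtain p1 p2 where "p = p1 @ y # p2"
    using assms(2) split_list unfolding sdom_def by metis
  with p have "is_path A r y (p1 @ [y])" "set (p1 @ [y]) \<subseteq> set p"
    using is_path_append[of A r z p1 y p2] by auto
  then show "x \<in> set p" using assms(1) unfolding sdom_def by blast
qed

lemma sdom_antisym:
  assumes "reaches A r y" "sdom A r x y" "sdom A r y x"
  shows "x = y"
proof (rule ccontr)
  assume "x \<noteq> y"
  obtain q where q: "is_path A r y q" using assms(1) unfolding reaches_def by blast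
  then obtain q1 q2 where q12: "q = q1 @ y # q2" "y \<notin> set q1"
    using is_path_last_in_set split_list_first by metis
  then have path_y: "is_path A r y (q1 @ [y])" using q is_path_append by metis
  then have "x \<in> set q1" using assms(2) \<open>x \<noteq> y\<close> unfolding sdom_def by auto
  then obtain q3 q4 where "q1 = q3 @ x # q4" using split_list by metis
  then have "is_path A r x (q3 @ [x])" using path_y is_path_append[of A r y q3 x] by simp
  then have "y \<in> set (q3 @ [x])" using assms(3) unfolding sdom_def by blast
  then show False using q12 \<open>q1 = q3 @ x # q4\<close> \<open>x \<noteq> y\<close> by auto
qed

lemma sdom_if_not_in_suffix:
  assumes "is_path A r v (q1 @ y # q2)" "x \<notin> set q2" "sdom A r x v"
  shows "sdom A r x y"
  unfolding sdom_def
proof (intro allI impI)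
  fix p assume p: "is_path A r y p"
  moreover have "is_path A y v (y # q2)" using assms(1) is_path_append by metis
  ultimately obtain p' where "is_path A r v p'" "set p' = set p \<union> set (y # q2)"
    by (rule is_path_join)
  then show "x \<in> set p"
    using assms(2,3) is_path_last_in_set[OF p] unfolding sdom_def by auto
qed

lemma sdom_linear:
  assumes "reaches A r v" "sdom A r x v" "sdom A r y v"
  shows "sdom A r x y \<or> sdom A r y x"
proof -
  obtain q where q: "is_path A r v q" "distinct q"
    using assms(1) by (rule reaches_distinct_path)
  have "y \<in> set q" using q assms(3) unfolding sdom_def by blast
  then obtain q1 q2 where q12: "q = q1 @ y # q2" using split_list by metis
  show ?thesis
  proof (cases "x \<in> set q2")
    case True
    then obtain q3 q4 where "q2 = q3 @ x # q4" using split_list by metis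
    then have "is_path A r v ((q1 @ y # q3) @ x # q4)" "y \<notin> set q4"
      using q q12 by auto
    then show ?thesis using sdom_if_not_in_suffix assms(3) by metis
  qed (use q q12 sdom_if_not_in_suffix assms(2) in metis)
qed

lemma sdom_if_tdom_not_tdom:
  assumes "reaches A s v" "sdom A s u v" "tdom A t w u" "w \<noteq> u" "\<not> tdom A t w v"
  shows "sdom A s w v" "w \<noteq> v" "\<not> sdom A s w u"
proof -
  obtain Q where Q: "is_path A v t Q" "w \<notin> set Q" using assms(5) unfolding tdom_def by blast
  have after_u: "w \<in> set p2" if "is_path A s v (p1 @ u # p2)" for p1 p2
  proof -
    have "is_path A u v (u # p2)" using that is_path_append by metis
    then obtain R where "is_path A u t R" "set R = set (u # p2) \<union> set Q"
      using Q(1) by (rule is_path_join)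
    then show ?thesis using assms(3,4) Q(2) unfolding tdom_def by auto
  qed
  show "sdom A s w v" unfolding sdom_def
  proof (intro allI impI)
    fix P assume P: "is_path A s v P"
    then obtain p1 p2 where "P = p1 @ u # p2"
      using assms(2) split_list unfolding sdom_def by metis
    then show "w \<in> set P" using P after_u by auto
  qed
  show "w \<noteq> v" using Q is_path_hd_in_set by metis
  obtain P where P: "is_path A s v P" "distinct P" using assms(1) by (rule reaches_distinct_path)
  then obtain p1 p2 where P12: "P = p1 @ u # p2"
    using assms(2) split_list unfolding sdom_def by metis
  then have "is_path A s u (p1 @ [u])" "w \<notin> set (p1 @ [u])"
    using P after_u[of p1 p2] is_path_append[of A s v p1 u p2] by auto
  then show "\<not> sdom A s w u" unfolding sdom_def by blast
qed

lemma tdom_if_sdom_not_sdom: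
  assumes "reaches A u t" "tdom A t v u" "sdom A s x v" "\<not> sdom A s x u" "x \<noteq> v"
  shows "tdom A t x u" "tdom A t v x"
proof -
  obtain P where P: "is_path A s u P" "x \<notin> set P" using assms(4) unfolding sdom_def by blast
  have before_v: "x \<in> set r1" if "is_path A u t (r1 @ v # r2)" for r1 r2
  proof -
    have "is_path A u v (r1 @ [v])" using that is_path_append by metis
    with P(1) obtain R where "is_path A s v R" "set R = set P \<union> set (r1 @ [v])"
      by (rule is_path_join)
    then show ?thesis using assms(3,5) P(2) unfolding sdom_def by auto
  qed
  show "tdom A t x u" unfolding tdom_def
  proof (intro allI impI)
    fix R assume R: "is_path A u t R"
    then obtain r1 r2 where "R = r1 @ v # r2"
      using assms(2) split_list unfolding tdom_def by metis
    then show "x \<in> set R" using R before_v by auto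
  qed
  obtain R where R: "is_path A u t R" "distinct R" using assms(1) by (rule reaches_distinct_path)
  then obtain r1 r2 where R12: "R = r1 @ v # r2"
    using assms(2) split_list unfolding tdom_def by metis
  with R before_v obtain r3 r4 where r1: "r1 = r3 @ x # r4" using split_list by metis
  show "tdom A t v x" unfolding tdom_def
  proof (intro allI impI)
    fix Q assume Q: "is_path A x t Q"
    have "is_path A u x (r3 @ [x])" using R(1) R12 r1 is_path_append[of A u t r3 x] by simp
    then obtain R' where "is_path A u t R'" "set R' = set (r3 @ [x]) \<union> set Q"
      using Q by (rule is_path_join)
    moreover have "v \<notin> set (r3 @ [x])" using R(2) R12 r1 assms(5) by auto
    ultimately show "v \<in> set Q" using assms(2) unfolding tdom_def by auto
  qed
qed

locale rooted_graph =
  fixes N :: "'a set" and A :: "('a \<times> 'a) set" and r :: 'a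
  assumes finite_nodes: "finite N" and root_in_nodes: "r \<in> N"
    and reaches_from_root: "\<And>x. x \<in> N \<Longrightarrow> reaches A r x"
begin

definition sdom_count :: "'a \<Rightarrow> nat" where
  "sdom_count x = card {y \<in> N. sdom A r y x}"

lemma sdom_count_le: "sdom_count x \<le> card N"
  unfolding sdom_count_def by (rule card_mono[OF finite_nodes]) auto

lemma sdom_count_less:
  assumes "x \<in> N" "sdom A r y x" "\<not> sdom A r x y"
  shows "sdom_count y < sdom_count x"
proof -
  have "{z \<in> N. sdom A r z y} \<subseteq> {z \<in> N. sdom A r z x}"
    using sdom_trans[OF _ assms(2)] by blast
  moreover have "x \<in> {z \<in> N. sdom A r z x} - {z \<in> N. sdom A r z y}"
    using assms(1,3) sdom_refl by simp
  ultimately show ?thesis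
    unfolding sdom_count_def using finite_nodes by (intro psubset_card_mono) auto
qed

lemma ex_immediate_sdom:
  assumes "v \<in> N" "v \<noteq> r"
  shows "\<exists>m. m \<in> N \<and> m \<noteq> v \<and> sdom A r m v \<and>
    (\<forall>w\<in>N. w \<noteq> v \<and> sdom A r w v \<longrightarrow> sdom A r w m)"
proof -
  define S where "S = {x \<in> N. x \<noteq> v \<and> sdom A r x v}"
  have "r \<in> S" unfolding S_def using assms(2) root_in_nodes sdom_root by auto
  moreover have "sdom_count x < Suc (card N)" for x
    using sdom_count_le le_imp_less_Suc by blast
  ultimately obtain m where m: "m \<in> S"
    and deepest: "\<And>x. x \<in> S \<Longrightarrow> sdom_count x \<le> sdom_count m"
    using ex_has_greatest_nat[of "\<lambda>x. x \<in> S" r sdom_count "Suc (card N)"] by blast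
  have "sdom A r x m" if x: "x \<in> S" for x
  proof (rule ccontr)
    assume not_x_m: "\<not> sdom A r x m"
    have "sdom A r x v" "sdom A r m v" using x m unfolding S_def by auto
    then have "sdom A r m x"
      using sdom_linear[OF reaches_from_root[OF assms(1)]] not_x_m by blast
    then have "sdom_count m < sdom_count x"
      using sdom_count_less not_x_m x unfolding S_def by blast
    then show False using deepest[OF x] by simp
  qed
  then show ?thesis using m unfolding S_def by blast
qed

lemma idom_s:
  assumes "v \<in> N" "v \<noteq> r"
  shows idom_s_in_nodes: "idom_s N A r v \<in> N"
    and idom_s_neq: "idom_s N A r v \<noteq> v"
    and sdom_idom_s: "sdom A r (idom_s N A r v) v"
    and sdom_idom_sI: "\<And>w. w \<in> N \<Longrightarrow> w \<noteq> v \<Longrightarrow> sdom A r w v \<Longrightarrow> sdom A r w (idom_s N A r v)"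
proof -
  let ?P = "\<lambda>m. m \<in> N \<and> m \<noteq> v \<and> sdom A r m v \<and>
    (\<forall>w\<in>N. w \<noteq> v \<and> sdom A r w v \<longrightarrow> sdom A r w m)"
  obtain m where m: "?P m" using ex_immediate_sdom[OF assms] by blast
  have "idom_s N A r v = m" unfolding idom_s_def
  proof (rule the_equality)
    fix m' assume "?P m'"
    then have "sdom A r m' m" "sdom A r m m'" using m by auto
    then show "m' = m" using sdom_antisym[OF reaches_from_root] m by blast
  qed (rule m)
  with m have "?P (idom_s N A r v)" by simp
  then show "idom_s N A r v \<in> N" "idom_s N A r v \<noteq> v" "sdom A r (idom_s N A r v) v"
    "\<And>w. w \<in> N \<Longrightarrow> w \<noteq> v \<Longrightarrow> sdom A r w v \<Longrightarrow> sdom A r w (idom_s N A r v)"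
    by simp_all
qed

(* anc v i is meaningful only when has_anc v i: beyond the root, idom_s N A r r is unspecified. *)
definition anc :: "'a \<Rightarrow> nat \<Rightarrow> 'a" where
  "anc v i = (idom_s N A r ^^ i) v"

definition has_anc :: "'a \<Rightarrow> nat \<Rightarrow> bool" where
  "has_anc v i \<longleftrightarrow> (\<forall>j<i. anc v j \<noteq> r)"

lemma anc_0 [simp]: "anc v 0 = v"
  by (simp add: anc_def)

lemma anc_Suc: "anc v (Suc i) = anc (idom_s N A r v) i"
  by (simp add: anc_def funpow_Suc_right del: funpow.simps)

lemma anc_Suc': "anc v (Suc i) = idom_s N A r (anc v i)"
  by (simp add: anc_def)

lemma has_anc_0 [simp]: "has_anc v 0"
  by (simp add: has_anc_def)

lemma has_anc_Suc: "has_anc v (Suc i) \<longleftrightarrow> v \<noteq> r \<and> has_anc (idom_s N A r v) i"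
  unfolding has_anc_def All_less_Suc2 by (simp add: anc_Suc)

lemma has_anc_mono: "has_anc v i \<Longrightarrow> j \<le> i \<Longrightarrow> has_anc v j"
  unfolding has_anc_def by auto

lemma anc_in_nodes_and_sdom:
  assumes "v \<in> N" "has_anc v i"
  shows "anc v i \<in> N \<and> (\<forall>j\<le>i. sdom A r (anc v i) (anc v j))"
  using assms
proof (induction i arbitrary: v)
  case 0
  then show ?case using sdom_refl by simp
next
  case (Suc i)
  then have v: "v \<noteq> r" "has_anc (idom_s N A r v) i" by (simp_all add: has_anc_Suc)
  then have IH: "anc v (Suc i) \<in> N" "\<forall>j\<le>i. sdom A r (anc v (Suc i)) (anc v (Suc j))"
    using Suc.IH[of "idom_s N A r v"] Suc.prems(1) idom_s_in_nodes by (simp_all add: anc_Suc)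
  moreover have "sdom A r (anc v (Suc i)) v"
    using IH(2) sdom_idom_s[OF Suc.prems(1) v(1)] sdom_trans by (fastforce simp: anc_Suc)
  ultimately show ?case by (metis anc_0 not0_implies_Suc Suc_le_mono)
qed

lemma anc_in_nodes: "v \<in> N \<Longrightarrow> has_anc v i \<Longrightarrow> anc v i \<in> N"
  using anc_in_nodes_and_sdom by blast

lemma sdom_anc_anc: "v \<in> N \<Longrightarrow> has_anc v i \<Longrightarrow> j \<le> i \<Longrightarrow> sdom A r (anc v i) (anc v j)"
  using anc_in_nodes_and_sdom by blast

lemma sdom_anc: "v \<in> N \<Longrightarrow> has_anc v i \<Longrightarrow> sdom A r (anc v i) v"
  using sdom_anc_anc[of v i 0] by simp

lemma not_sdom_anc_anc:
  assumes "v \<in> N" "has_anc v j" "i < j"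
  shows "\<not> sdom A r (anc v i) (anc v j)"
proof
  let ?w = "anc v i"
  assume w_j: "sdom A r ?w (anc v j)"
  have w: "?w \<in> N" "?w \<noteq> r"
    using assms anc_in_nodes has_anc_mono unfolding has_anc_def by (auto intro: less_imp_le)
  have "sdom A r (anc v j) (idom_s N A r ?w)"
    using sdom_anc_anc[OF assms(1,2), of "Suc i"] assms(3) by (simp add: anc_Suc')
  then have "sdom A r ?w (idom_s N A r ?w)" using sdom_trans[OF w_j] by blast
  then show False
    using sdom_antisym[OF reaches_from_root sdom_idom_s] idom_s_neq w by blast
qed

lemma inj_on_anc:
  assumes "v \<in> N" "has_anc v k"
  shows "inj_on (anc v) {..k}"
proof -
  have "anc v i \<noteq> anc v j" if "i < j" "j \<le> k" for i j
    using not_sdom_anc_anc[OF assms(1) has_anc_mono[OF assms(2) that(2)] that(1)] sdom_refl by metis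
  then show ?thesis by (intro inj_onI) (metis atMost_iff linorder_neqE_nat)
qed

lemma sdom_imp_anc:
  assumes "x \<in> N" "y \<in> N" "sdom A r x y"
  shows "\<exists>i. has_anc y i \<and> anc y i = x"
  using assms(2,3)
proof (induction "sdom_count y" arbitrary: y rule: less_induct)
  case less
  show ?case
  proof (cases "x = y")
    case False
    then have "y \<noteq> r" using less.prems(2) sdom_root_imp_eq by metis
    let ?y' = "idom_s N A r y"
    have y': "?y' \<in> N" "sdom A r x ?y'"
      using idom_s_in_nodes sdom_idom_sI less.prems \<open>y \<noteq> r\<close> assms(1) False by auto
    have "\<not> sdom A r y ?y'"
      using sdom_antisym[OF reaches_from_root[OF less.prems(1)]] \<open>y \<noteq> r\<close> less.prems(1)
        idom_s_neq sdom_idom_s by metis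
    then have "sdom_count ?y' < sdom_count y"
      using sdom_count_less less.prems(1) sdom_idom_s[OF less.prems(1) \<open>y \<noteq> r\<close>] by blast
    then obtain i where "has_anc ?y' i" "anc ?y' i = x" using less.hyps y' by blast
    then show ?thesis using \<open>y \<noteq> r\<close> by (intro exI[of _ "Suc i"]) (simp add: has_anc_Suc anc_Suc)
  qed (auto intro: exI[of _ 0])
qed

lemma strict_sdom_in_anc_image:
  assumes "v \<in> N" "has_anc v k" "x \<in> N" "sdom A r x v" "x \<noteq> v" "\<not> sdom A r x (anc v k)"
  shows "x \<in> anc v ` {0<..<k}"
proof -
  obtain i where i: "has_anc v i" "anc v i = x" using sdom_imp_anc assms(1,3,4) by blast
  have "0 < i" using i assms(5) by (auto intro: gr0I)
  moreover have "i < k" using sdom_anc_anc[OF assms(1) i(1)] i(2) assms(6) by (meson not_le)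
  ultimately show ?thesis using i(2) by auto
qed

lemma s_anc_iff: "s_anc N A r k v u \<longleftrightarrow> has_anc v k \<and> anc v k = u"
  by (induction k arbitrary: v) (auto simp: has_anc_Suc anc_Suc)

lemma dom_t_converse: "dom_t N (A\<inverse>) r u k = (if has_anc u k then anc u k else r)"
proof -
  have "idom_t N (A\<inverse>) r = idom_s N A r"
    unfolding idom_t_def idom_s_def tdom_eq_sdom_converse by simp
  then show ?thesis by (induction k arbitrary: u) (simp_all add: has_anc_Suc anc_Suc)
qed

end

lemma card_le_if_inj_on_image_subset:
  "inj_on f X \<Longrightarrow> f ` X \<subseteq> g ` Y \<Longrightarrow> finite Y \<Longrightarrow> card X \<le> card Y"
  by (meson card_image_le card_inj_on_le finite_imageI le_trans)

locale st_digraph =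
  fixes N :: "'a set" and A :: "('a \<times> 'a) set" and s t :: 'a
  assumes st_graph: "st_graph N A s t"
begin

lemma reaches_from_source: "x \<in> N \<Longrightarrow> reaches A s x"
  and reaches_sink: "x \<in> N \<Longrightarrow> reaches A x t"
  using st_graph unfolding st_graph_def by blast+

sublocale S: rooted_graph N A s
  using st_graph reaches_from_source unfolding st_graph_def by unfold_locales auto

sublocale T: rooted_graph N "A\<inverse>" t
proof
  show "reaches (A\<inverse>) t x" if "x \<in> N" for x
    using reaches_sink[OF that] by (simp add: reaches_converse)
qed (use st_graph in \<open>auto simp: st_graph_def\<close>)

lemma tdom_dom_t_anc:
  assumes v: "v \<in> N" and k: "S.has_anc v k" "0 < k"
  shows "tdom A t (dom_t N A t (S.anc v k) k) v"
proof (rule ccontr)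
  let ?u = "S.anc v k"
  assume not_tdom: "\<not> tdom A t (dom_t N A t ?u k) v"
  have u: "?u \<in> N" using S.anc_in_nodes v k by blast
  have "tdom A t t v" unfolding tdom_def using is_path_last_in_set by fast
  then have u_k: "T.has_anc ?u k" and dom_t_eq: "dom_t N A t ?u k = T.anc ?u k"
    using not_tdom T.dom_t_converse[of ?u k] by (simp_all split: if_splits)
  have "T.anc ?u ` {0<..k} \<subseteq> S.anc v ` {0<..<k}"
  proof
    fix x assume "x \<in> T.anc ?u ` {0<..k}"
    then obtain j where j: "0 < j" "j \<le> k" "x = T.anc ?u j" by auto
    have u_j: "T.has_anc ?u j" using T.has_anc_mono[OF u_k j(2)] .
    have "x \<in> N" using T.anc_in_nodes[OF u u_j] j(3) by simp
    moreover have "tdom A t x ?u"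
      using T.sdom_anc[OF u u_j] j(3) by (simp add: tdom_eq_sdom_converse)
    moreover have "x \<noteq> ?u"
      using inj_onD[OF T.inj_on_anc[OF u u_k], of j 0] j by auto
    moreover have "\<not> tdom A t x v"
    proof
      assume "tdom A t x v"
      moreover have "tdom A t (T.anc ?u k) x"
        using T.sdom_anc_anc[OF u u_k j(2)] j(3) by (simp add: tdom_eq_sdom_converse)
      ultimately show False
        using not_tdom dom_t_eq sdom_trans[of "A\<inverse>" t] by (metis tdom_eq_sdom_converse)
    qed
    ultimately have "sdom A s x v" "x \<noteq> v" "\<not> sdom A s x ?u"
      using sdom_if_tdom_not_tdom[OF reaches_from_source[OF v] S.sdom_anc[OF v k(1)]]
      by auto
    then show "x \<in> S.anc v ` {0<..<k}"
      using S.strict_sdom_in_anc_image[OF v k(1) \<open>x \<in> N\<close>] by blast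
  qed
  moreover have "inj_on (T.anc ?u) {0<..k}"
    using T.inj_on_anc[OF u u_k] by (rule inj_on_subset) auto
  ultimately have "card {0<..k} \<le> card {0<..<k}"
    using card_le_if_inj_on_image_subset by blast
  then show False using k(2) by simp
qed

lemma eq_dom_t_anc_if_tdom:
  assumes v: "v \<in> N" and k: "S.has_anc v k" "0 < k" and v_u: "tdom A t v (S.anc v k)"
  shows "v = dom_t N A t (S.anc v k) k"
proof -
  let ?u = "S.anc v k"
  have u: "?u \<in> N" using S.anc_in_nodes v k by blast
  have S_anc_neq: "S.anc v i \<noteq> S.anc v i'" if "i \<le> k" "i' \<le> k" "i \<noteq> i'" for i i'
    using inj_onD[OF S.inj_on_anc[OF v k(1)]] that by auto
  obtain j where u_j: "T.has_anc ?u j" and v_eq: "T.anc ?u j = v"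
    using T.sdom_imp_anc[OF v u] v_u by (auto simp: tdom_eq_sdom_converse)
  have "?u \<noteq> v" using S_anc_neq[of k 0] k(2) by simp
  with v_eq have "j \<noteq> 0" by (cases j) auto
  have "S.anc v ` {0<..<k} \<subseteq> T.anc ?u ` {0<..<j}"
  proof
    fix x assume "x \<in> S.anc v ` {0<..<k}"
    then obtain i where i: "0 < i" "i < k" "x = S.anc v i" by auto
    have v_i: "S.has_anc v i" using S.has_anc_mono[OF k(1)] i(2) by simp
    have x: "x \<in> N" "x \<noteq> v" "x \<noteq> ?u"
      using S.anc_in_nodes[OF v v_i] S_anc_neq[of i 0] S_anc_neq[of i k] i by auto
    have "tdom A t x ?u" "tdom A t v x"
      using tdom_if_sdom_not_sdom[OF reaches_sink[OF u] v_u S.sdom_anc[OF v v_i]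
          S.not_sdom_anc_anc[OF v k(1) i(2)]] x(2) i(3) by auto
    moreover have "\<not> tdom A t x v"
      using calculation(2) sdom_antisym[OF T.reaches_from_root[OF v]] x(2)
      by (auto simp: tdom_eq_sdom_converse)
    ultimately show "x \<in> T.anc ?u ` {0<..<j}"
      using T.strict_sdom_in_anc_image[OF u u_j x(1)] x(3) v_eq
      by (simp add: tdom_eq_sdom_converse)
  qed
  moreover have "inj_on (S.anc v) {0<..<k}"
    using S.inj_on_anc[OF v k(1)] by (rule inj_on_subset) auto
  ultimately have "card {0<..<k} \<le> card {0<..<j}"
    using card_le_if_inj_on_image_subset by blast
  then have "k \<le> j" using k(2) \<open>j \<noteq> 0\<close> by simp
  then have dom_t_eq: "dom_t N A t ?u k = T.anc ?u k"
    using T.has_anc_mono[OF u_j] T.dom_t_converse[of ?u k] by auto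
  have "\<not> k < j"
    using T.not_sdom_anc_anc[OF u u_j] tdom_dom_t_anc[OF v k] dom_t_eq v_eq
    by (auto simp: tdom_eq_sdom_converse)
  then show ?thesis using \<open>k \<le> j\<close> dom_t_eq v_eq by simp
qed

end

theorem lemma3:
  fixes N :: "'a set" and A :: "('a \<times> 'a) set" and s t u v :: 'a and k :: nat
  assumes "st_graph N A s t"
    and "u \<in> N" and "v \<in> N"
    and "k > 0"
    and "s_anc N A s k v u"
  shows "tdom A t (dom_t N A t u k) v \<and>
         (tdom A t v u \<longrightarrow> v = dom_t N A t u k)"
proof -
  interpret st_digraph N A s t using assms(1) by (rule st_digraph.intro)
  have "S.has_anc v k" "S.anc v k = u" using assms(5) S.s_anc_iff by auto
  then show ?thesis
    using tdom_dom_t_anc eq_dom_t_anc_if_tdom assms(3,4) by blast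
qed

end
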